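(* Let $n,\kappa,d'\ge1$ and $1\le i_0\le d'$. Let $\mathcal{V}_1,\dots,\mathcal{V}_K\in\mathbb{R}^{p_1\times\cdots\times p_{d'}}$, with $p_{i_0}=n^\kappa$, be an orthonormal system (with respect to the Frobenius inner product) of rank-one tensors $\mathcal{V}_k=\mathbf{v}^1_k\circ\cdots\circ\mathbf{v}^{d'}_k$ with $\|\mathbf{v}^i_k\|_2=1$ for all $i,k$. Let $A_{i_0}\in\mathbb{R}^{m\times n^\kappa}$ have the RIP$(\varepsilon/2,\mathcal{S}_{1,2})$ property and assume $\mathbf{v}^{i_0}_k\in\mathcal{S}_1$ for all $k$. Let $\mathcal{L}(\mathcal{X})=\mathcal{X}\times_{i_0}A_{i_0}$. Then $(1-\varepsilon)\|\mathcal{V}_k\|^2\le\|\mathcal{L}\mathcal{V}_k\|^2\le(1+\varepsilon)\|\mathcal{V}_k\|^2$ for all $k$, and $(1-\varepsilon)\|\mathcal{V}_k\pm\mathcal{V}_l\|^2\le\|\mathcal{L}(\mathcal{V}_k\pm\mathcal{V}_l)\|^2\le(1+\varepsilon)\|\mathcal{V}_k\pm\mathcal{V}_l\|^2$ for all $1\le k,l\le K$.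
   Context: $\|\cdot\|$ is the Frobenius norm, $\circ$ the outer product, and $\times_j$ the $j$-mode product $(\mathcal{X}\times_jU)_{i_1,\dots,\ell,\dots,i_D}=\sum_{i_j}\mathcal{X}_{i_1,\dots,i_j,\dots,i_D}U_{\ell,i_j}$. $\mathcal{S}_1=\{\mathbf{u}^1\otimes\cdots\otimes\mathbf{u}^\kappa:\mathbf{u}^i\in\mathbb{S}^{n-1}\}\subset\mathbb{R}^{n^\kappa}$ ($\otimes$ Kronecker product), $\mathcal{S}_2=\{(\mathbf{x}+\mathbf{y})/\|\mathbf{x}+\mathbf{y}\|_2:\mathbf{x},\mathbf{y}\in\mathcal{S}_1,\langle\mathbf{x},\mathbf{y}\rangle=0\}$, $\mathcal{S}_{1,2}=\mathcal{S}_1\cup\mathcal{S}_2$. A matrix $A$ has RIP$(\varepsilon,\mathcal{S})$ if $(1-\varepsilon)\|s\|^2\le\|As\|^2\le(1+\varepsilon)\|s\|^2$ for all $s\in\mathcal{S}$. *)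

theory Defs
  imports "HOL-Analysis.Analysis"
begin

text \<open>Conventions: modes are indexed 0..d-1, vector entries 0..N-1.
  A tensor of order d with mode sizes p 0, ..., p (d-1) is a function on
  multi-indices (nat => nat); its valid index set is tidx d p.\<close>

definition tidx :: "nat \<Rightarrow> (nat \<Rightarrow> nat) \<Rightarrow> (nat \<Rightarrow> nat) set" where
  "tidx d p = PiE {..<d} (\<lambda>j. {..<p j})"

definition finner :: "nat \<Rightarrow> (nat \<Rightarrow> nat) \<Rightarrow> ((nat \<Rightarrow> nat) \<Rightarrow> real) \<Rightarrow> ((nat \<Rightarrow> nat) \<Rightarrow> real) \<Rightarrow> real" where
  "finner d p X Y = (\<Sum>idx\<in>tidx d p. X idx * Y idx)"

definition fnorm2 :: "nat \<Rightarrow> (nat \<Rightarrow> nat) \<Rightarrow> ((nat \<Rightarrow> nat) \<Rightarrow> real) \<Rightarrow> real" where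
  "fnorm2 d p X = (\<Sum>idx\<in>tidx d p. (X idx)\<^sup>2)"

definition mode_prod :: "(nat \<Rightarrow> nat) \<Rightarrow> ((nat \<Rightarrow> nat) \<Rightarrow> real) \<Rightarrow> nat \<Rightarrow> (nat \<Rightarrow> nat \<Rightarrow> real) \<Rightarrow> ((nat \<Rightarrow> nat) \<Rightarrow> real)" where
  "mode_prod p X j U = (\<lambda>idx. \<Sum>t<p j. X (idx(j := t)) * U (idx j) t)"

definition outer :: "nat \<Rightarrow> (nat \<Rightarrow> nat \<Rightarrow> real) \<Rightarrow> ((nat \<Rightarrow> nat) \<Rightarrow> real)" where
  "outer d v = (\<lambda>idx. \<Prod>i<d. v i (idx i))"

definition vinner :: "nat \<Rightarrow> (nat \<Rightarrow> real) \<Rightarrow> (nat \<Rightarrow> real) \<Rightarrow> real" where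
  "vinner N x y = (\<Sum>t<N. x t * y t)"

definition vnorm2 :: "nat \<Rightarrow> (nat \<Rightarrow> real) \<Rightarrow> real" where
  "vnorm2 N x = (\<Sum>t<N. (x t)\<^sup>2)"

text \<open>Kronecker product of vectors in R^n (first factor most significant).\<close>
fun kron :: "nat \<Rightarrow> (nat \<Rightarrow> real) list \<Rightarrow> nat \<Rightarrow> real" where
  "kron n [] = (\<lambda>t. 1)"
| "kron n (u # us) = (\<lambda>t. u (t div n ^ length us) * kron n us (t mod n ^ length us))"

definition S1 :: "nat \<Rightarrow> nat \<Rightarrow> (nat \<Rightarrow> real) set" where
  "S1 n \<kappa> = {x. \<exists>us. length us = \<kappa> \<and> (\<forall>u\<in>set us. vnorm2 n u = 1)
                    \<and> (\<forall>t<n ^ \<kappa>. x t = kron n us t)}"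

definition S2 :: "nat \<Rightarrow> nat \<Rightarrow> (nat \<Rightarrow> real) set" where
  "S2 n \<kappa> = {s. \<exists>x\<in>S1 n \<kappa>. \<exists>y\<in>S1 n \<kappa>. vinner (n ^ \<kappa>) x y = 0 \<and>
                 (\<forall>t<n ^ \<kappa>. s t = (x t + y t) / sqrt (vnorm2 (n ^ \<kappa>) (\<lambda>r. x r + y r)))}"

definition S12 :: "nat \<Rightarrow> nat \<Rightarrow> (nat \<Rightarrow> real) set" where
  "S12 n \<kappa> = S1 n \<kappa> \<union> S2 n \<kappa>"

definition matvec :: "nat \<Rightarrow> (nat \<Rightarrow> nat \<Rightarrow> real) \<Rightarrow> (nat \<Rightarrow> real) \<Rightarrow> (nat \<Rightarrow> real)" where
  "matvec N A x = (\<lambda>r. \<Sum>t<N. A r t * x t)"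

definition RIP :: "nat \<Rightarrow> nat \<Rightarrow> (nat \<Rightarrow> nat \<Rightarrow> real) \<Rightarrow> real \<Rightarrow> (nat \<Rightarrow> real) set \<Rightarrow> bool" where
  "RIP m N A \<epsilon> S = (\<forall>s\<in>S. (1 - \<epsilon>) * vnorm2 N s \<le> vnorm2 m (matvec N A s)
                          \<and> vnorm2 m (matvec N A s) \<le> (1 + \<epsilon>) * vnorm2 N s)"

end

theory Submission
  imports Defs
begin

text \<open>The mode product acts on a rank-one tensor only through its i0-th factor, and the
  Frobenius inner product of two rank-one tensors factors into the inner products of their
  factors. Hence the norms of L V_k are the norms of A v_k^i0, which RIP on S1 controls,
  and the cross term of L(V_k +- V_l) is the product of the inner product of A v_k^i0 and
  A v_l^i0 with a factor of modulus at most one coming from the other modes. By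
  orthogonality either that factor vanishes or v_k^i0 and v_l^i0 are orthogonal, and then
  polarization with RIP on the normalized sums in S2 bounds the cross term by eps/2.\<close>

lemma fnorm2_finner: "fnorm2 d q X = finner d q X X"
  by (simp add: fnorm2_def finner_def power2_eq_square)

lemma vnorm2_vinner: "vnorm2 N x = vinner N x x"
  by (simp add: vnorm2_def vinner_def power2_eq_square)

lemma fnorm2_add_scaled:
  "fnorm2 d q (\<lambda>idx. X idx + s * Y idx)
   = fnorm2 d q X + 2 * s * finner d q X Y + s\<^sup>2 * fnorm2 d q Y"
  by (simp add: fnorm2_def finner_def power2_sum sum.distrib sum_distrib_left
      power_mult_distrib algebra_simps)

lemma fnorm2_add_scaled_self:
  "fnorm2 d q (\<lambda>idx. X idx + s * X idx) = (1 + s)\<^sup>2 * fnorm2 d q X"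
  by (simp add: fnorm2_add_scaled fnorm2_finner power2_eq_square algebra_simps)

lemma vnorm2_add_scaled:
  "vnorm2 N (\<lambda>t. x t + s * y t) = vnorm2 N x + 2 * s * vinner N x y + s\<^sup>2 * vnorm2 N y"
  by (simp add: vnorm2_def vinner_def power2_sum sum.distrib sum_distrib_left
      power_mult_distrib algebra_simps)

lemma vnorm2_divide: "vnorm2 N (\<lambda>t. x t / c) = vnorm2 N x / c\<^sup>2"
  by (simp add: vnorm2_def power_divide sum_divide_distrib)

lemma vinner_square_le: "(vinner N x y)\<^sup>2 \<le> vnorm2 N x * vnorm2 N y"
  unfolding vinner_def vnorm2_def by (rule Cauchy_Schwarz_ineq_sum)

lemma mode_prod_add_scaled:
  "mode_prod p (\<lambda>idx. X idx + s * Y idx) j U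
   = (\<lambda>idx. mode_prod p X j U idx + s * mode_prod p Y j U idx)"
  by (simp add: mode_prod_def sum.distrib sum_distrib_left algebra_simps)

lemma matvec_add_scaled:
  "matvec N A (\<lambda>t. x t + s * y t) = (\<lambda>r. matvec N A x r + s * matvec N A y r)"
  by (simp add: matvec_def sum.distrib sum_distrib_left algebra_simps)

lemma matvec_divide: "matvec N A (\<lambda>t. x t / c) = (\<lambda>r. matvec N A x r / c)"
  by (simp add: matvec_def sum_divide_distrib)

lemma RIP_subset: "RIP m N A e T \<Longrightarrow> S \<subseteq> T \<Longrightarrow> RIP m N A e S"
  unfolding RIP_def by blast

lemma vinner_abs_le_one:
  assumes "vnorm2 N x = 1" "vnorm2 N y = 1"
  shows "\<bar>vinner N x y\<bar> \<le> 1"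
  using vinner_square_le[of N x y] assms by (simp add: abs_square_le_1)

lemma abs_prod_vinner_le_one:
  assumes "\<And>i. i \<in> I \<Longrightarrow> vnorm2 (q i) (f i) = 1 \<and> vnorm2 (q i) (g i) = 1"
  shows "\<bar>\<Prod>i\<in>I. vinner (q i) (f i) (g i)\<bar> \<le> 1"
  unfolding abs_prod using assms by (intro prod_le_1) (simp add: vinner_abs_le_one)

lemma S1_uminus:
  assumes "y \<in> S1 n \<kappa>" "\<kappa> \<ge> 1"
  shows "(\<lambda>t. - y t) \<in> S1 n \<kappa>"
proof -
  obtain us where factors: "length us = \<kappa>" "\<forall>w\<in>set us. vnorm2 n w = 1"
    and y: "\<forall>t<n ^ \<kappa>. y t = kron n us t"
    using assms(1) unfolding S1_def by blast
  obtain u rs where us: "us = u # rs"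
    using factors(1) assms(2) by (cases us) auto
  have "vnorm2 n (\<lambda>t. - u t) = vnorm2 n u" by (simp add: vnorm2_def)
  then show ?thesis
    unfolding S1_def using factors y by (intro CollectI exI[of _ "(\<lambda>t. - u t) # rs"]) (auto simp: us)
qed

lemma RIP_S2_orthogonal_sum:
  assumes rip: "RIP m (n ^ \<kappa>) A e (S2 n \<kappa>)"
    and "x \<in> S1 n \<kappa>" "y \<in> S1 n \<kappa>" "vinner (n ^ \<kappa>) x y = 0"
    and "vnorm2 (n ^ \<kappa>) x = 1" "vnorm2 (n ^ \<kappa>) y = 1"
  shows "2 * (1 - e) \<le> vnorm2 m (matvec (n ^ \<kappa>) A (\<lambda>t. x t + y t))
    \<and> vnorm2 m (matvec (n ^ \<kappa>) A (\<lambda>t. x t + y t)) \<le> 2 * (1 + e)"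
proof -
  have sum_norm: "vnorm2 (n ^ \<kappa>) (\<lambda>t. x t + y t) = 2"
    using vnorm2_add_scaled[of "n ^ \<kappa>" x 1 y] assms by simp
  define z where "z = (\<lambda>t. (x t + y t) / sqrt (vnorm2 (n ^ \<kappa>) (\<lambda>r. x r + y r)))"
  have "z \<in> S2 n \<kappa>"
    unfolding S2_def z_def using assms by blast
  moreover have "vnorm2 (n ^ \<kappa>) z = 1"
    by (simp add: z_def vnorm2_divide sum_norm)
  moreover have "vnorm2 m (matvec (n ^ \<kappa>) A z) = vnorm2 m (matvec (n ^ \<kappa>) A (\<lambda>t. x t + y t)) / 2"
    by (simp add: z_def sum_norm matvec_divide vnorm2_divide)
  ultimately show ?thesis
    using rip unfolding RIP_def by fastforce
qed

lemma RIP_S2_orthogonal_cross: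
  assumes "RIP m (n ^ \<kappa>) A e (S2 n \<kappa>)" "\<kappa> \<ge> 1"
    and "x \<in> S1 n \<kappa>" "y \<in> S1 n \<kappa>" "vinner (n ^ \<kappa>) x y = 0"
    and "vnorm2 (n ^ \<kappa>) x = 1" "vnorm2 (n ^ \<kappa>) y = 1"
  shows "\<bar>vinner m (matvec (n ^ \<kappa>) A x) (matvec (n ^ \<kappa>) A y)\<bar> \<le> e"
proof -
  have "(\<lambda>t. - y t) \<in> S1 n \<kappa>" using S1_uminus assms by blast
  moreover have "vinner (n ^ \<kappa>) x (\<lambda>t. - y t) = 0" "vnorm2 (n ^ \<kappa>) (\<lambda>t. - y t) = 1"
    using assms by (simp_all add: vinner_def vnorm2_def sum_negf)
  ultimately have diff: "2 * (1 - e) \<le> vnorm2 m (matvec (n ^ \<kappa>) A (\<lambda>t. x t + (- 1) * y t))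
    \<and> vnorm2 m (matvec (n ^ \<kappa>) A (\<lambda>t. x t + (- 1) * y t)) \<le> 2 * (1 + e)"
    using RIP_S2_orthogonal_sum[of m n \<kappa> A e x "\<lambda>t. - y t"] assms by simp
  have sum: "2 * (1 - e) \<le> vnorm2 m (matvec (n ^ \<kappa>) A (\<lambda>t. x t + 1 * y t))
    \<and> vnorm2 m (matvec (n ^ \<kappa>) A (\<lambda>t. x t + 1 * y t)) \<le> 2 * (1 + e)"
    using RIP_S2_orthogonal_sum[of m n \<kappa> A e x y] assms by simp
  show ?thesis
    using sum diff unfolding matvec_add_scaled vnorm2_add_scaled by (simp add: abs_le_iff)
qed

lemma finner_outer:
  "finner d q (outer d f) (outer d g) = (\<Prod>i<d. vinner (q i) (f i) (g i))"
proof -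
  have "(\<Prod>i<d. vinner (q i) (f i) (g i)) = (\<Prod>i<d. \<Sum>t\<in>{..<q i}. f i t * g i t)"
    by (simp add: vinner_def)
  also have "\<dots> = (\<Sum>idx\<in>PiE {..<d} (\<lambda>i. {..<q i}). \<Prod>i<d. f i (idx i) * g i (idx i))"
    by (rule prod_sum_PiE) auto
  finally show ?thesis
    by (simp add: finner_def outer_def tidx_def prod.distrib)
qed

lemma fnorm2_outer: "fnorm2 d q (outer d f) = (\<Prod>i<d. vnorm2 (q i) (f i))"
  by (simp add: fnorm2_finner finner_outer vnorm2_vinner)

lemma prod_lessThan_remove:
  "j < d \<Longrightarrow> (\<Prod>i<d. h i) = h j * (\<Prod>i\<in>{..<d}-{j}. h i)"
  for h :: "nat \<Rightarrow> 'a::comm_monoid_mult"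
  using prod.remove[of "{..<d}" j h] by simp

lemma mode_prod_outer:
  assumes "j < d"
  shows "mode_prod p (outer d f) j U = outer d (f(j := matvec (p j) U (f j)))"
proof
  fix idx
  let ?rest = "\<Prod>i\<in>{..<d}-{j}. f i (idx i)"
  have "outer d f (idx(j := t)) = f j t * ?rest" for t
    unfolding outer_def prod_lessThan_remove[OF assms] by (auto intro!: prod.cong)
  moreover have "outer d (f(j := matvec (p j) U (f j))) idx = matvec (p j) U (f j) (idx j) * ?rest"
    unfolding outer_def prod_lessThan_remove[OF assms] by (auto intro!: prod.cong)
  ultimately show "mode_prod p (outer d f) j U idx = outer d (f(j := matvec (p j) U (f j))) idx"
    by (simp add: mode_prod_def matvec_def sum_distrib_left mult_ac)
qed

lemma finner_mode_prod_outer: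
  assumes "j < d"
  shows "finner d (p(j := m)) (mode_prod p (outer d f) j U) (mode_prod p (outer d g) j U)
    = vinner m (matvec (p j) U (f j)) (matvec (p j) U (g j))
      * (\<Prod>i\<in>{..<d}-{j}. vinner (p i) (f i) (g i))"
  unfolding mode_prod_outer[OF assms] finner_outer prod_lessThan_remove[OF assms]
  by (auto intro!: prod.cong)

lemma fnorm2_mode_prod_outer_unit:
  assumes "j < d" "\<forall>i<d. vnorm2 (p i) (f i) = 1"
  shows "fnorm2 d (p(j := m)) (mode_prod p (outer d f) j U) = vnorm2 m (matvec (p j) U (f j))"
proof -
  have "(\<Prod>i\<in>{..<d}-{j}. vinner (p i) (f i) (f i)) = 1"
    using assms(2) by (intro prod.neutral) (simp add: vnorm2_vinner[symmetric])
  then show ?thesis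
    using finner_mode_prod_outer[OF assms(1), of p m f U f] by (simp add: fnorm2_finner vnorm2_vinner)
qed

lemma RIP_mode_prod_outer:
  assumes "j < d" "RIP m (p j) A e S" "f j \<in> S" "\<forall>i<d. vnorm2 (p i) (f i) = 1"
  shows "1 - e \<le> fnorm2 d (p(j := m)) (mode_prod p (outer d f) j A)
    \<and> fnorm2 d (p(j := m)) (mode_prod p (outer d f) j A) \<le> 1 + e"
  using assms fnorm2_mode_prod_outer_unit[OF assms(1,4)] unfolding RIP_def by fastforce

lemma RIP_mode_prod_orthogonal_outer:
  fixes \<sigma> :: real
  assumes j: "j < d" and pj: "p j = n ^ \<kappa>" and "\<kappa> \<ge> 1"
    and rip: "RIP m (n ^ \<kappa>) A e (S12 n \<kappa>)"
    and unit_f: "\<forall>i<d. vnorm2 (p i) (f i) = 1" and unit_g: "\<forall>i<d. vnorm2 (p i) (g i) = 1"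
    and S1_f: "f j \<in> S1 n \<kappa>" and S1_g: "g j \<in> S1 n \<kappa>"
    and orth: "finner d p (outer d f) (outer d g) = 0"
    and \<sigma>: "\<sigma> \<in> {1, -1}"
  defines "W \<equiv> \<lambda>idx. outer d f idx + \<sigma> * outer d g idx"
  shows "(1 - 2 * e) * fnorm2 d p W \<le> fnorm2 d (p(j := m)) (mode_prod p W j A)
    \<and> fnorm2 d (p(j := m)) (mode_prod p W j A) \<le> (1 + 2 * e) * fnorm2 d p W"
proof -
  let ?Af = "matvec (n ^ \<kappa>) A (f j)" and ?Ag = "matvec (n ^ \<kappa>) A (g j)"
  let ?c = "\<Prod>i\<in>{..<d}-{j}. vinner (p i) (f i) (g i)"
  have rip_S1: "RIP m (p j) A e (S1 n \<kappa>)" and rip_S2: "RIP m (n ^ \<kappa>) A e (S2 n \<kappa>)"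
    using RIP_subset[OF rip] pj by (simp_all add: S12_def)
  have unit_fj: "vnorm2 (n ^ \<kappa>) (f j) = 1" and unit_gj: "vnorm2 (n ^ \<kappa>) (g j) = 1"
    using unit_f unit_g j pj by auto
  have bound_f: "1 - e \<le> vnorm2 m ?Af \<and> vnorm2 m ?Af \<le> 1 + e"
    using RIP_mode_prod_outer[OF j rip_S1 S1_f unit_f] fnorm2_mode_prod_outer_unit[OF j unit_f] pj
    by simp
  have bound_g: "1 - e \<le> vnorm2 m ?Ag \<and> vnorm2 m ?Ag \<le> 1 + e"
    using RIP_mode_prod_outer[OF j rip_S1 S1_g unit_g] fnorm2_mode_prod_outer_unit[OF j unit_g] pj
    by simp
  have cross: "\<bar>vinner m ?Af ?Ag * ?c\<bar> \<le> e"
  proof (cases "vinner (n ^ \<kappa>) (f j) (g j) = 0")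
    case True
    then have "\<bar>vinner m ?Af ?Ag\<bar> \<le> e"
      using RIP_S2_orthogonal_cross[OF rip_S2 \<open>\<kappa> \<ge> 1\<close> S1_f S1_g _ unit_fj unit_gj] by simp
    moreover have "\<bar>?c\<bar> \<le> 1"
      using unit_f unit_g by (intro abs_prod_vinner_le_one) auto
    ultimately have "\<bar>vinner m ?Af ?Ag\<bar> * \<bar>?c\<bar> \<le> e * 1"
      by (intro mult_mono) auto
    then show ?thesis by (simp add: abs_mult)
  next
    case False
    then have "?c = 0"
      using orth pj by (simp add: finner_outer prod_lessThan_remove[OF j])
    then show ?thesis using bound_f by (simp only: mult_zero_right abs_zero) linarith
  qed
  have "fnorm2 d p W = 2"
    using orth \<sigma> unit_f unit_g by (auto simp: W_def fnorm2_add_scaled fnorm2_outer)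
  moreover have "fnorm2 d (p(j := m)) (mode_prod p W j A)
    = vnorm2 m ?Af + 2 * \<sigma> * (vinner m ?Af ?Ag * ?c) + vnorm2 m ?Ag"
    using \<sigma> pj
    by (auto simp: W_def mode_prod_add_scaled fnorm2_add_scaled finner_mode_prod_outer[OF j]
        fnorm2_mode_prod_outer_unit[OF j unit_f] fnorm2_mode_prod_outer_unit[OF j unit_g])
  ultimately show ?thesis
    using \<sigma> cross bound_f bound_g by (auto simp: abs_le_iff)
qed

lemma mode_prod_bounds_add_scaled_self:
  fixes s :: real
  assumes "(1 - e) * fnorm2 d p X \<le> fnorm2 d q (mode_prod p X j U)
    \<and> fnorm2 d q (mode_prod p X j U) \<le> (1 + e) * fnorm2 d p X"
  defines "W \<equiv> \<lambda>idx. X idx + s * X idx"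
  shows "(1 - e) * fnorm2 d p W \<le> fnorm2 d q (mode_prod p W j U)
    \<and> fnorm2 d q (mode_prod p W j U) \<le> (1 + e) * fnorm2 d p W"
proof -
  have "(1 + s)\<^sup>2 * ((1 - e) * fnorm2 d p X) \<le> (1 + s)\<^sup>2 * fnorm2 d q (mode_prod p X j U)
    \<and> (1 + s)\<^sup>2 * fnorm2 d q (mode_prod p X j U) \<le> (1 + s)\<^sup>2 * ((1 + e) * fnorm2 d p X)"
    using assms(1) by (simp add: mult_left_mono)
  then show ?thesis
    by (simp add: W_def mode_prod_add_scaled fnorm2_add_scaled_self mult_ac)
qed

theorem lemma4:
  fixes n \<kappa> d m K i0 :: nat
    and p :: "nat \<Rightarrow> nat"
    and v :: "nat \<Rightarrow> nat \<Rightarrow> nat \<Rightarrow> real"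
    and A :: "nat \<Rightarrow> nat \<Rightarrow> real"
    and \<epsilon> :: real
  assumes "n \<ge> 1" and "\<kappa> \<ge> 1" and "d \<ge> 1" and "i0 < d"
    and "p i0 = n ^ \<kappa>"
    and unit: "\<forall>k<K. \<forall>i<d. vnorm2 (p i) (v k i) = 1"
    and orth: "\<forall>k<K. \<forall>l<K. finner d p (outer d (v k)) (outer d (v l)) = (if k = l then 1 else 0)"
    and rip: "RIP m (n ^ \<kappa>) A (\<epsilon> / 2) (S12 n \<kappa>)"
    and inS1: "\<forall>k<K. v k i0 \<in> S1 n \<kappa>"
  shows "(\<forall>k<K.
            (1 - \<epsilon>) * fnorm2 d p (outer d (v k))
              \<le> fnorm2 d (p(i0 := m)) (mode_prod p (outer d (v k)) i0 A)
          \<and> fnorm2 d (p(i0 := m)) (mode_prod p (outer d (v k)) i0 A)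
              \<le> (1 + \<epsilon>) * fnorm2 d p (outer d (v k)))
       \<and> (\<forall>k<K. \<forall>l<K. \<forall>\<sigma>\<in>{1, -1::real}.
            (let W = (\<lambda>idx. outer d (v k) idx + \<sigma> * outer d (v l) idx) in
              (1 - \<epsilon>) * fnorm2 d p W \<le> fnorm2 d (p(i0 := m)) (mode_prod p W i0 A)
            \<and> fnorm2 d (p(i0 := m)) (mode_prod p W i0 A) \<le> (1 + \<epsilon>) * fnorm2 d p W))"
proof -
  let ?V = "\<lambda>k. outer d (v k)" and ?q = "p(i0 := m)"
  have rip_S1: "RIP m (p i0) A (\<epsilon> / 2) (S1 n \<kappa>)"
    using RIP_subset[OF rip] \<open>p i0 = n ^ \<kappa>\<close> by (simp add: S12_def)
  have norm_V: "fnorm2 d p (?V k) = 1" if "k < K" for k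
    using orth that by (simp add: fnorm2_finner)
  have bound_LV: "1 - \<epsilon> / 2 \<le> fnorm2 d ?q (mode_prod p (?V k) i0 A)
      \<and> fnorm2 d ?q (mode_prod p (?V k) i0 A) \<le> 1 + \<epsilon> / 2" if "k < K" for k
    using RIP_mode_prod_outer[where p = p, OF \<open>i0 < d\<close> rip_S1] inS1 unit that by blast
  have single: "(1 - \<epsilon>) * fnorm2 d p (?V k) \<le> fnorm2 d ?q (mode_prod p (?V k) i0 A)
      \<and> fnorm2 d ?q (mode_prod p (?V k) i0 A) \<le> (1 + \<epsilon>) * fnorm2 d p (?V k)" if "k < K" for k
    using bound_LV[OF that] norm_V[OF that] by auto
  have pair: "(1 - \<epsilon>) * fnorm2 d p W \<le> fnorm2 d ?q (mode_prod p W i0 A)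
      \<and> fnorm2 d ?q (mode_prod p W i0 A) \<le> (1 + \<epsilon>) * fnorm2 d p W"
    if "k < K" "l < K" "\<sigma> \<in> {1, -1}" "W = (\<lambda>idx. ?V k idx + \<sigma> * ?V l idx)" for k l \<sigma> W
    using single[OF that(1)] mode_prod_bounds_add_scaled_self
      RIP_mode_prod_orthogonal_outer[where p = p, OF \<open>i0 < d\<close> \<open>p i0 = n ^ \<kappa>\<close> \<open>\<kappa> \<ge> 1\<close> rip]
      unit inS1 orth that
    by (cases "k = l") auto
  show ?thesis
    using single pair by (simp add: Let_def)
qed

end
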